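(* Consider the downtown bathtub model with and without perimeter control described in the context, with a fixed number $N_s>0$ of suburban commuters. Then: (i) the short-run equilibrium bathtub cost under perimeter control, $C_s^{bp*}$, is uniquely determined, namely (in the controlled regime $\theta^p>2$) $$C_s^{bp*}=\frac{\beta\gamma}{\beta+\gamma}\,\frac{N_s}{n_jv_f/(4L)}+\frac{4\alpha L}{v_f}(1-\ln 2);$$ (ii) the introduction of autonomous vehicles decreases $C_s^{bp*}$: $C_s^{bp*}$ is strictly decreasing in $n_j$ and strictly increasing in $\alpha$, so replacing $(\alpha,n_j)$ by $(\eta\alpha,\xi n_j)$ with $\frac{\beta}{\alpha}<\eta\le1$, $\xi\ge1$, $(\eta,\xi)\neq(1,1)$ strictly decreases it; (iii) hypercongestion mitigation by perimeter control decreases the short-run equilibrium bathtub cost: if the equilibrium without control has $\theta=\frac{C_s^{b*}v_f}{\alpha L}>2$ (hypercongestion), then $C_s^{b*}>C_s^{bp*}$.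
   Context: Downtown traffic: accumulation $n(t)\ge0$, $\dot n=I-G$, outflow $G=nv/L$, $L>0$ trip length, $v=v_f(1-n/n_j)$, $v_f,n_j>0$; travel time $T(t)=L/v(t)$; schedule cost $s(t)=\beta(t^*-t)$ for $t\le t^*$, $\gamma(t-t^* )$ for $t>t^*$; $\alpha,\beta,\gamma>0$. Without control: bathtub cost $C_s^b(t)=\alpha T(t)+s(t)$; a short-run equilibrium is $(n(\cdot),C_s^{b*})$ with $C_s^b(t)=C_s^{b*}$ when $n(t)>0$, $\ge C_s^{b*}$ when $n(t)=0$, and $\int n v/L\,dt=N_s$; it satisfies $N_s=\alpha n_j(\frac1\beta+\frac1\gamma)(\ln\theta+\frac1\theta-1)$ with $\theta=C_s^{b*}v_f/(\alpha L)$. Perimeter control: inflow $I(t)=I_p:=n_jv_f/(4L)$ when $n(t)=n_j/2$, and equal to the boundary arrival rate when $n(t)<n_j/2$; excess vehicles wait in a FIFO point queue, with waiting time $T_w(t)=q(t)/I_p$ for queue length $q(t)$ met by the commuter arriving at $t$; during the control period $[t_s^p,t_e^p]$ downtown travel time is $T^p(t)=2L/v_f+T_w(t)$, otherwise $T^p(t)=T(t)$; bathtub cost $C_s^{bp}(t)=\alpha T^p(t)+s(t)$; equilibrium $(n,q,C_s^{bp*})$ with $C_s^{bp}(t)=C_s^{bp*}$ when $n(t)>0$, $\ge$ when $n(t)=0$, $n(t)=n_j/2$ when $q(t)>0$, $n(t)\le n_j/2$ when $q(t)=0$, and $\int nv/L\,dt=N_s$; $\theta^p=C_s^{bp*}v_f/(\alpha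 L)$. Autonomous vehicles: $\alpha\mapsto\eta\alpha$, $n_j\mapsto\xi n_j$. *)

theory Defs
  imports "HOL-Analysis.Analysis"
begin

definition speed :: "real \<Rightarrow> real \<Rightarrow> real \<Rightarrow> real" where
  "speed vf nj x = vf * (1 - x / nj)"

definition sched :: "real \<Rightarrow> real \<Rightarrow> real \<Rightarrow> real \<Rightarrow> real" where
  "sched \<beta> \<gamma> tstar t = (if t \<le> tstar then \<beta> * (tstar - t) else \<gamma> * (t - tstar))"

definition Ip :: "real \<Rightarrow> real \<Rightarrow> real \<Rightarrow> real" where
  "Ip L vf nj = nj * vf / (4 * L)"

definition travel_time :: "real \<Rightarrow> real \<Rightarrow> real \<Rightarrow> (real \<Rightarrow> real) \<Rightarrow> real \<Rightarrow> real" where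
  "travel_time L vf nj n t = L / speed vf nj (n t)"

definition bathtub_cost ::
  "real \<Rightarrow> real \<Rightarrow> real \<Rightarrow> real \<Rightarrow> real \<Rightarrow> real \<Rightarrow> real \<Rightarrow> (real \<Rightarrow> real) \<Rightarrow> real \<Rightarrow> real" where
  "bathtub_cost \<alpha> \<beta> \<gamma> L vf nj tstar n t =
     \<alpha> * travel_time L vf nj n t + sched \<beta> \<gamma> tstar t"

definition bathtub_eq ::
  "real \<Rightarrow> real \<Rightarrow> real \<Rightarrow> real \<Rightarrow> real \<Rightarrow> real \<Rightarrow> real \<Rightarrow> real \<Rightarrow> (real \<Rightarrow> real) \<Rightarrow> real \<Rightarrow> bool" where
  "bathtub_eq \<alpha> \<beta> \<gamma> L vf nj tstar Ns n C \<longleftrightarrow>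
     (\<forall>t. 0 \<le> n t \<and> n t < nj) \<and>
     (\<forall>t. n t > 0 \<longrightarrow> bathtub_cost \<alpha> \<beta> \<gamma> L vf nj tstar n t = C) \<and>
     (\<forall>t. n t = 0 \<longrightarrow> bathtub_cost \<alpha> \<beta> \<gamma> L vf nj tstar n t \<ge> C) \<and>
     ((\<lambda>t. n t * speed vf nj (n t) / L) has_integral Ns) UNIV"

text \<open>Travel time under perimeter control. The control period is the period during which
  the inflow is metered, i.e. during which n(t) = n_j/2; there T^p = 2L/v_f + q(t)/I_p.\<close>
definition travel_time_p ::
  "real \<Rightarrow> real \<Rightarrow> real \<Rightarrow> (real \<Rightarrow> real) \<Rightarrow> (real \<Rightarrow> real) \<Rightarrow> real \<Rightarrow> real" where
  "travel_time_p L vf nj n q t =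
     (if n t = nj / 2 then 2 * L / vf + q t / Ip L vf nj else travel_time L vf nj n t)"

definition bathtub_cost_p ::
  "real \<Rightarrow> real \<Rightarrow> real \<Rightarrow> real \<Rightarrow> real \<Rightarrow> real \<Rightarrow> real \<Rightarrow> (real \<Rightarrow> real) \<Rightarrow> (real \<Rightarrow> real) \<Rightarrow> real \<Rightarrow> real" where
  "bathtub_cost_p \<alpha> \<beta> \<gamma> L vf nj tstar n q t =
     \<alpha> * travel_time_p L vf nj n q t + sched \<beta> \<gamma> tstar t"

definition bathtub_eq_p ::
  "real \<Rightarrow> real \<Rightarrow> real \<Rightarrow> real \<Rightarrow> real \<Rightarrow> real \<Rightarrow> real \<Rightarrow> real \<Rightarrow> (real \<Rightarrow> real) \<Rightarrow> (real \<Rightarrow> real) \<Rightarrow> real \<Rightarrow> bool" where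
  "bathtub_eq_p \<alpha> \<beta> \<gamma> L vf nj tstar Ns n q C \<longleftrightarrow>
     (\<forall>t. 0 \<le> n t) \<and> (\<forall>t. 0 \<le> q t) \<and>
     (\<forall>t. n t > 0 \<longrightarrow> bathtub_cost_p \<alpha> \<beta> \<gamma> L vf nj tstar n q t = C) \<and>
     (\<forall>t. n t = 0 \<longrightarrow> bathtub_cost_p \<alpha> \<beta> \<gamma> L vf nj tstar n q t \<ge> C) \<and>
     (\<forall>t. q t > 0 \<longrightarrow> n t = nj / 2) \<and>
     (\<forall>t. q t = 0 \<longrightarrow> n t \<le> nj / 2) \<and>
     ((\<lambda>t. n t * speed vf nj (n t) / L) has_integral Ns) UNIV"

definition Cbp_formula :: "real \<Rightarrow> real \<Rightarrow> real \<Rightarrow> real \<Rightarrow> real \<Rightarrow> real \<Rightarrow> real \<Rightarrow> real" where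
  "Cbp_formula \<alpha> \<beta> \<gamma> L vf nj Ns =
     \<beta> * \<gamma> / (\<beta> + \<gamma>) * (Ns / Ip L vf nj) + 4 * \<alpha> * L / vf * (1 - ln 2)"

end

theory Submission
  imports Defs
begin

(* In an equilibrium every commuter who travels bears the same total cost C, so a commuter
   arriving at t spends C - s(t) on travel. The outflow n v / L is a function G of this travel
   cost x: it vanishes at the free-flow cost a = \<alpha> L / v_f, peaks with value I_p at x = 2a,
   and decreases beyond (hypercongestion). Perimeter control holds n at n_j / 2, i.e. caps the
   argument of G at 2a, the excess cost being queueing. Since s is piecewise linear with slopes
   \<beta> and \<gamma>, substituting x = C - s(t) gives N_s = (1 / \<beta> + 1 / \<gamma>) \<integral>_a^C G(x) dx. Under
   control the integrand is the constant I_p beyond 2a, which yields the closed form for C and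
   its monotonicity in \<alpha> and n_j; without control the integrand is strictly below I_p there,
   so serving the same N_s requires a strictly higher cost. *)

lemma has_integral_affine_early:
  fixes P :: "real \<Rightarrow> real"
  assumes "\<beta> > 0" and "(P has_integral I) {lo..C}"
  shows "((\<lambda>t. P (C - \<beta> * (ts - t))) has_integral I / \<beta>) {ts - (C - lo) / \<beta> .. ts}"
proof -
  have integral: "((\<lambda>t. P (\<beta> *\<^sub>R t + (C - \<beta> * ts))) has_integral I /\<^sub>R \<beta> ^ DIM(real))
      (cbox ((lo - (C - \<beta> * ts)) /\<^sub>R \<beta>) ((C - (C - \<beta> * ts)) /\<^sub>R \<beta>))"
    using assms by (intro has_integral_affinity') auto
  have interval: "cbox ((lo - (C - \<beta> * ts)) /\<^sub>R \<beta>) ((C - (C - \<beta> * ts)) /\<^sub>R \<beta>)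
      = {ts - (C - lo) / \<beta> .. ts}"
    using assms by (simp add: field_simps)
  have integrand: "(\<lambda>t. P (\<beta> *\<^sub>R t + (C - \<beta> * ts))) = (\<lambda>t. P (C - \<beta> * (ts - t)))"
    by (simp add: algebra_simps)
  have scale: "I /\<^sub>R \<beta> ^ DIM(real) = I / \<beta>"
    by (simp add: divide_inverse_commute)
  show ?thesis using integral unfolding interval integrand scale .
qed

lemma has_integral_affine_late:
  fixes P :: "real \<Rightarrow> real"
  assumes "\<gamma> > 0" and "(P has_integral I) {lo..C}"
  shows "((\<lambda>t. P (C - \<gamma> * (t - ts))) has_integral I / \<gamma>) {ts .. ts + (C - lo) / \<gamma>}"
proof -
  have "((\<lambda>y. P (- y)) has_integral I) {-C .. -lo}"
    using assms(2) by (simp add: has_integral_reflect_real)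
  then have integral: "((\<lambda>t. P (- (\<gamma> *\<^sub>R t + (- C - \<gamma> * ts)))) has_integral I /\<^sub>R \<gamma> ^ DIM(real))
      (cbox ((- C - (- C - \<gamma> * ts)) /\<^sub>R \<gamma>) ((- lo - (- C - \<gamma> * ts)) /\<^sub>R \<gamma>))"
    using assms(1) by (intro has_integral_affinity'[where f = "\<lambda>y. P (- y)"]) auto
  have interval: "cbox ((- C - (- C - \<gamma> * ts)) /\<^sub>R \<gamma>) ((- lo - (- C - \<gamma> * ts)) /\<^sub>R \<gamma>)
      = {ts .. ts + (C - lo) / \<gamma>}"
    using assms by (simp add: field_simps)
  have integrand: "(\<lambda>t. P (- (\<gamma> *\<^sub>R t + (- C - \<gamma> * ts)))) = (\<lambda>t. P (C - \<gamma> * (t - ts)))"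
    by (simp add: algebra_simps)
  have scale: "I /\<^sub>R \<gamma> ^ DIM(real) = I / \<gamma>"
    by (simp add: divide_inverse_commute)
  show ?thesis using integral unfolding interval integrand scale .
qed

lemma has_integral_comp_sched:
  fixes P :: "real \<Rightarrow> real"
  assumes \<beta>: "\<beta> > 0" and \<gamma>: "\<gamma> > 0" and "lo \<le> C"
    and P: "(P has_integral I) {lo..C}" and P_zero: "\<And>x. x < lo \<Longrightarrow> P x = 0"
  shows "((\<lambda>t. P (C - sched \<beta> \<gamma> ts t)) has_integral (1 / \<beta> + 1 / \<gamma>) * I) UNIV"
proof -
  define t1 where "t1 = ts - (C - lo) / \<beta>"
  define t2 where "t2 = ts + (C - lo) / \<gamma>"
  have "t1 \<le> ts" "ts \<le> t2"
    using \<beta> \<gamma> \<open>lo \<le> C\<close> by (simp_all add: t1_def t2_def)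
  have "((\<lambda>t. P (C - sched \<beta> \<gamma> ts t)) has_integral I / \<beta>) {t1..ts}"
    unfolding t1_def
    by (rule has_integral_eq[OF _ has_integral_affine_early[OF \<beta> P]]) (simp add: sched_def)
  moreover have "((\<lambda>t. P (C - sched \<beta> \<gamma> ts t)) has_integral I / \<gamma>) {ts..t2}"
    unfolding t2_def
    by (rule has_integral_eq[OF _ has_integral_affine_late[OF \<gamma> P]]) (auto simp: sched_def)
  ultimately have "((\<lambda>t. P (C - sched \<beta> \<gamma> ts t)) has_integral I / \<beta> + I / \<gamma>) {t1..t2}"
    by (rule has_integral_combine[OF \<open>t1 \<le> ts\<close> \<open>ts \<le> t2\<close>])
  then have "((\<lambda>t. P (C - sched \<beta> \<gamma> ts t)) has_integral (1 / \<beta> + 1 / \<gamma>) * I) {t1..t2}"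
    by (simp add: algebra_simps)
  then show ?thesis
  proof (rule has_integral_on_superset)
    fix t assume "t \<notin> {t1..t2}"
    then consider "t < t1" | "t2 < t" by fastforce
    then have "C - lo < sched \<beta> \<gamma> ts t"
    proof cases
      case 1
      then have "t \<le> ts" "(C - lo) / \<beta> < ts - t" using \<open>t1 \<le> ts\<close> by (auto simp: t1_def)
      then show ?thesis using \<beta> by (simp add: sched_def pos_divide_less_eq mult.commute)
    next
      case 2
      then have "\<not> t \<le> ts" "(C - lo) / \<gamma> < t - ts" using \<open>ts \<le> t2\<close> by (auto simp: t2_def)
      then show ?thesis using \<gamma> by (simp add: sched_def pos_divide_less_eq mult.commute)
    qed
    then show "P (C - sched \<beta> \<gamma> ts t) = 0" by (intro P_zero) simp
  qed simp
qed

(* Inverting v = v_f (1 - n / n_j) at travel cost x = \<alpha> L / v gives n = n_j (1 - a / x)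
   with a = \<alpha> L / v_f, hence n v / L = n_j \<alpha> (1 / x - a / x^2). *)
definition outflow_at_cost :: "real \<Rightarrow> real \<Rightarrow> real \<Rightarrow> real \<Rightarrow> real \<Rightarrow> real" where
  "outflow_at_cost \<alpha> L vf nj x =
     (if x \<le> \<alpha> * L / vf then 0 else nj * \<alpha> * (1 / x - (\<alpha> * L / vf) / x\<^sup>2))"

(* Under control n \<le> n_j / 2, where the travel cost is 2a; cost above 2a is queueing. *)
definition outflow_at_cost_p :: "real \<Rightarrow> real \<Rightarrow> real \<Rightarrow> real \<Rightarrow> real \<Rightarrow> real" where
  "outflow_at_cost_p \<alpha> L vf nj x = outflow_at_cost \<alpha> L vf nj (min x (2 * (\<alpha> * L / vf)))"

lemma outflow_at_cost_eq:
  assumes "\<alpha> * L / vf \<le> x"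
  shows "outflow_at_cost \<alpha> L vf nj x = nj * \<alpha> * (1 / x - (\<alpha> * L / vf) / x\<^sup>2)"
  using assms by (cases "x = \<alpha> * L / vf") (auto simp: outflow_at_cost_def power2_eq_square)

lemma outflow_at_cost_travel_cost:
  assumes "\<alpha> > 0" "L > 0" "vf > 0" "nj > 0" "0 \<le> m" "m < nj"
  shows "outflow_at_cost \<alpha> L vf nj (\<alpha> * (L / speed vf nj m)) = m * speed vf nj m / L"
proof -
  define a where "a = \<alpha> * L / vf"
  define r where "r = 1 - m / nj"
  have "0 < r" "r \<le> 1" "a > 0"
    using assms by (simp_all add: r_def a_def field_simps)
  have cost: "\<alpha> * (L / speed vf nj m) = a / r"
    by (simp add: speed_def a_def r_def)
  have "a \<le> a / r"
    using \<open>0 < r\<close> \<open>r \<le> 1\<close> \<open>a > 0\<close> by (simp add: le_divide_eq)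
  then have "outflow_at_cost \<alpha> L vf nj (a / r) = nj * \<alpha> * (1 / (a / r) - a / (a / r)\<^sup>2)"
    unfolding a_def by (rule outflow_at_cost_eq)
  also have "\<dots> = nj * \<alpha> * r * (1 - r) / a"
    using \<open>0 < r\<close> \<open>a > 0\<close> by (simp add: power2_eq_square field_simps)
  also have "\<dots> = m * speed vf nj m / L"
    using assms by (simp add: a_def speed_def r_def field_simps)
  finally show ?thesis unfolding cost .
qed

lemma outflow_at_cost_capacity:
  assumes "\<alpha> > 0" "L > 0" "vf > 0" "nj > 0"
  shows "outflow_at_cost \<alpha> L vf nj (2 * (\<alpha> * L / vf)) = Ip L vf nj"
  using assms by (simp add: outflow_at_cost_def Ip_def power2_eq_square field_simps)

lemma outflow_at_cost_has_integral:
  assumes "\<alpha> > 0" "L > 0" "vf > 0" "nj > 0"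
    and \<theta>: "\<theta> = C * vf / (\<alpha> * L)" "1 \<le> \<theta>"
  shows "(outflow_at_cost \<alpha> L vf nj has_integral \<alpha> * nj * (ln \<theta> + 1 / \<theta> - 1)) {\<alpha> * L / vf .. C}"
proof -
  define a where "a = \<alpha> * L / vf"
  define H where "H = (\<lambda>x. nj * \<alpha> * (ln x + a / x))"
  have "a > 0" using assms(1-3) by (simp add: a_def)
  have C: "C = a * \<theta>" using assms(1-3) by (simp add: a_def \<theta>(1))
  have "a \<le> C" using \<open>a > 0\<close> \<theta>(2) by (simp add: C)
  have "(outflow_at_cost \<alpha> L vf nj has_integral H C - H a) {a..C}"
  proof (rule fundamental_theorem_of_calculus[OF \<open>a \<le> C\<close>])
    fix x assume x: "x \<in> {a..C}"
    then have "(H has_real_derivative nj * \<alpha> * (1 / x - a / x\<^sup>2)) (at x)"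
      using \<open>a > 0\<close> unfolding H_def
      by (auto intro!: derivative_eq_intros simp: power2_eq_square field_simps)
    moreover have "outflow_at_cost \<alpha> L vf nj x = nj * \<alpha> * (1 / x - a / x\<^sup>2)"
      using x unfolding a_def by (intro outflow_at_cost_eq) simp
    ultimately show "(H has_vector_derivative outflow_at_cost \<alpha> L vf nj x) (at x within {a..C})"
      by (simp add: has_real_derivative_iff_has_vector_derivative[symmetric]
          has_field_derivative_at_within)
  qed
  moreover have "H C - H a = \<alpha> * nj * (ln \<theta> + 1 / \<theta> - 1)"
  proof -
    have "ln C = ln a + ln \<theta>" "a / C = 1 / \<theta>"
      using \<open>a > 0\<close> \<theta>(2) by (simp_all add: C ln_mult)
    moreover have "H C - H a = nj * \<alpha> * ((ln C - ln a) + a / C - 1)"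
      using \<open>a > 0\<close> by (simp add: H_def algebra_simps)
    ultimately show ?thesis by simp
  qed
  ultimately show ?thesis by (simp add: a_def)
qed

lemma outflow_at_cost_p_has_integral:
  assumes "\<alpha> > 0" "L > 0" "vf > 0" "nj > 0"
    and \<theta>: "\<theta> = C * vf / (\<alpha> * L)" "2 \<le> \<theta>"
  shows "(outflow_at_cost_p \<alpha> L vf nj has_integral \<alpha> * nj * (\<theta> / 4 - 1 + ln 2)) {\<alpha> * L / vf .. C}"
proof -
  define a where "a = \<alpha> * L / vf"
  have "a > 0" using assms(1-3) by (simp add: a_def)
  have C: "C = a * \<theta>" using assms(1-3) by (simp add: a_def \<theta>(1))
  have "2 * a \<le> C" using \<open>a > 0\<close> \<theta>(2) by (simp add: C)
  have capacity: "outflow_at_cost \<alpha> L vf nj (2 * a) = Ip L vf nj"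
    unfolding a_def by (rule outflow_at_cost_capacity[OF assms(1-4)])
  have "(outflow_at_cost \<alpha> L vf nj has_integral \<alpha> * nj * (ln 2 + 1 / 2 - 1)) {a .. 2 * a}"
    using outflow_at_cost_has_integral[OF assms(1-4), of 2 "2 * a"] assms(1-3) by (simp add: a_def)
  then have "(outflow_at_cost_p \<alpha> L vf nj has_integral \<alpha> * nj * (ln 2 + 1 / 2 - 1)) {a .. 2 * a}"
    by (rule has_integral_eq[rotated]) (auto simp: outflow_at_cost_p_def a_def)
  moreover have "((\<lambda>x. Ip L vf nj) has_integral Ip L vf nj * (C - 2 * a)) {2 * a .. C}"
    using has_integral_const_real[of "Ip L vf nj" "2 * a" C] \<open>2 * a \<le> C\<close> by (simp add: mult.commute)
  then have "(outflow_at_cost_p \<alpha> L vf nj has_integral Ip L vf nj * (C - 2 * a)) {2 * a .. C}"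
    by (rule has_integral_eq[rotated]) (auto simp: outflow_at_cost_p_def a_def[symmetric] capacity)
  ultimately have "(outflow_at_cost_p \<alpha> L vf nj has_integral
      \<alpha> * nj * (ln 2 + 1 / 2 - 1) + Ip L vf nj * (C - 2 * a)) {a .. C}"
    using \<open>a > 0\<close> \<open>2 * a \<le> C\<close> by (intro has_integral_combine) auto
  moreover have "\<alpha> * nj * (ln 2 + 1 / 2 - 1) + Ip L vf nj * (C - 2 * a)
      = \<alpha> * nj * (\<theta> / 4 - 1 + ln 2)"
    using assms(1-4) by (simp add: Ip_def C a_def field_simps)
  ultimately show ?thesis by (simp add: a_def)
qed

lemma bathtub_eq_outflow:
  assumes "\<alpha> > 0" "L > 0" "vf > 0" "nj > 0"
    and eq: "bathtub_eq \<alpha> \<beta> \<gamma> L vf nj ts Ns n C"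
  shows "n t * speed vf nj (n t) / L = outflow_at_cost \<alpha> L vf nj (C - sched \<beta> \<gamma> ts t)"
proof (cases "n t = 0")
  case True
  then have "C - sched \<beta> \<gamma> ts t \<le> \<alpha> * L / vf"
    using eq by (auto simp: bathtub_eq_def bathtub_cost_def travel_time_def speed_def)
  with True show ?thesis by (simp add: outflow_at_cost_def)
next
  case False
  then have "0 < n t" "n t < nj"
    using eq by (auto simp: bathtub_eq_def less_le)
  moreover have "C - sched \<beta> \<gamma> ts t = \<alpha> * (L / speed vf nj (n t))"
    using eq \<open>0 < n t\<close> by (auto simp: bathtub_eq_def bathtub_cost_def travel_time_def)
  ultimately show ?thesis
    using outflow_at_cost_travel_cost[OF assms(1-4), of "n t"] by simp
qed

lemma bathtub_eq_p_outflow: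
  assumes "\<alpha> > 0" "L > 0" "vf > 0" "nj > 0"
    and eq: "bathtub_eq_p \<alpha> \<beta> \<gamma> L vf nj ts Ns n q C"
  shows "n t * speed vf nj (n t) / L = outflow_at_cost_p \<alpha> L vf nj (C - sched \<beta> \<gamma> ts t)"
proof -
  have "0 \<le> n t" "0 \<le> q t" using eq by (simp_all add: bathtub_eq_p_def)
  moreover have "n t \<le> nj / 2"
  proof -
    have "q t = 0 \<or> 0 < q t" using \<open>0 \<le> q t\<close> by auto
    then show ?thesis using eq by (auto simp: bathtub_eq_p_def)
  qed
  ultimately consider "n t = 0" | "n t = nj / 2" | "0 < n t" "n t < nj / 2"
    by fastforce
  then show ?thesis
  proof cases
    case 1
    then have "C - sched \<beta> \<gamma> ts t \<le> \<alpha> * L / vf"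
      using eq assms(4) by (auto simp: bathtub_eq_p_def bathtub_cost_p_def travel_time_p_def
          travel_time_def speed_def)
    with 1 show ?thesis by (simp add: outflow_at_cost_p_def outflow_at_cost_def min_le_iff_disj)
  next
    case 2
    then have "C - sched \<beta> \<gamma> ts t = 2 * (\<alpha> * L / vf) + \<alpha> * (q t / Ip L vf nj)"
      using eq assms(4)
      by (auto simp: bathtub_eq_p_def bathtub_cost_p_def travel_time_p_def algebra_simps)
    moreover have "0 \<le> \<alpha> * (q t / Ip L vf nj)"
      using assms \<open>0 \<le> q t\<close> by (simp add: Ip_def)
    ultimately have "outflow_at_cost_p \<alpha> L vf nj (C - sched \<beta> \<gamma> ts t) = Ip L vf nj"
      using outflow_at_cost_capacity[OF assms(1-4)] by (simp add: outflow_at_cost_p_def)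
    moreover have "n t * speed vf nj (n t) / L = Ip L vf nj"
      unfolding 2 using assms by (simp add: speed_def Ip_def field_simps)
    ultimately show ?thesis by simp
  next
    case 3
    then have cost: "C - sched \<beta> \<gamma> ts t = \<alpha> * (L / speed vf nj (n t))"
      using eq by (auto simp: bathtub_eq_p_def bathtub_cost_p_def travel_time_p_def travel_time_def)
    have "vf / 2 \<le> speed vf nj (n t)"
      using 3 assms by (simp add: speed_def field_simps)
    then have "\<alpha> * (L / speed vf nj (n t)) \<le> 2 * (\<alpha> * L / vf)"
      using assms by (simp add: field_simps)
    then show ?thesis
      using outflow_at_cost_travel_cost[OF assms(1-4), of "n t"] 3
      by (simp add: cost outflow_at_cost_p_def)
  qed
qed

lemma bathtub_eq_demand:
  assumes "\<alpha> > 0" "\<beta> > 0" "\<gamma> > 0" "L > 0" "vf > 0" "nj > 0"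
    and eq: "bathtub_eq \<alpha> \<beta> \<gamma> L vf nj ts Ns n C"
    and \<theta>: "\<theta> = C * vf / (\<alpha> * L)" "1 \<le> \<theta>"
  shows "Ns = \<alpha> * nj * (1 / \<beta> + 1 / \<gamma>) * (ln \<theta> + 1 / \<theta> - 1)"
proof -
  have "\<alpha> * L / vf > 0" "C = \<alpha> * L / vf * \<theta>"
    using assms(1,4,5) by (simp_all add: \<theta>(1))
  then have "\<alpha> * L / vf \<le> C"
    using \<theta>(2) by (metis mult_le_cancel_left1 not_less_iff_gr_or_eq)
  then have "((\<lambda>t. outflow_at_cost \<alpha> L vf nj (C - sched \<beta> \<gamma> ts t)) has_integral
      (1 / \<beta> + 1 / \<gamma>) * (\<alpha> * nj * (ln \<theta> + 1 / \<theta> - 1))) UNIV"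
    by (rule has_integral_comp_sched[OF assms(2,3) _
          outflow_at_cost_has_integral[OF assms(1,4-6) \<theta>]])
       (simp_all add: outflow_at_cost_def)
  moreover have "((\<lambda>t. outflow_at_cost \<alpha> L vf nj (C - sched \<beta> \<gamma> ts t)) has_integral Ns) UNIV"
    using eq bathtub_eq_outflow[OF assms(1,4-6) eq] by (simp add: bathtub_eq_def)
  ultimately show ?thesis
    using has_integral_unique by (metis mult.commute mult.left_commute)
qed

lemma bathtub_eq_p_demand:
  assumes "\<alpha> > 0" "\<beta> > 0" "\<gamma> > 0" "L > 0" "vf > 0" "nj > 0"
    and eq: "bathtub_eq_p \<alpha> \<beta> \<gamma> L vf nj ts Ns n q C"
    and \<theta>: "\<theta> = C * vf / (\<alpha> * L)" "2 \<le> \<theta>"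
  shows "Ns = \<alpha> * nj * (1 / \<beta> + 1 / \<gamma>) * (\<theta> / 4 - 1 + ln 2)"
proof -
  have "\<alpha> * L / vf > 0" "C = \<alpha> * L / vf * \<theta>"
    using assms(1,4,5) by (simp_all add: \<theta>(1))
  then have "\<alpha> * L / vf \<le> C"
    using \<theta>(2) by (metis mult_le_cancel_left1 not_less_iff_gr_or_eq one_le_numeral order.trans)
  then have "((\<lambda>t. outflow_at_cost_p \<alpha> L vf nj (C - sched \<beta> \<gamma> ts t)) has_integral
      (1 / \<beta> + 1 / \<gamma>) * (\<alpha> * nj * (\<theta> / 4 - 1 + ln 2))) UNIV"
    by (rule has_integral_comp_sched[OF assms(2,3) _
          outflow_at_cost_p_has_integral[OF assms(1,4-6) \<theta>]])
       (simp_all add: outflow_at_cost_p_def outflow_at_cost_def min_le_iff_disj)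
  moreover have "((\<lambda>t. outflow_at_cost_p \<alpha> L vf nj (C - sched \<beta> \<gamma> ts t)) has_integral Ns) UNIV"
    using eq bathtub_eq_p_outflow[OF assms(1,4-6) eq] by (simp add: bathtub_eq_p_def)
  ultimately show ?thesis
    using has_integral_unique by (metis mult.commute mult.left_commute)
qed

lemma bathtub_eq_p_cost:
  assumes "\<alpha> > 0" "\<beta> > 0" "\<gamma> > 0" "L > 0" "vf > 0" "nj > 0"
    and eq: "bathtub_eq_p \<alpha> \<beta> \<gamma> L vf nj ts Ns n q C"
    and controlled: "2 < C * vf / (\<alpha> * L)"
  shows "C = Cbp_formula \<alpha> \<beta> \<gamma> L vf nj Ns"
proof -
  define \<theta> where "\<theta> = C * vf / (\<alpha> * L)"
  have "Ns = \<alpha> * nj * (1 / \<beta> + 1 / \<gamma>) * (\<theta> / 4 - 1 + ln 2)"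
    using controlled by (intro bathtub_eq_p_demand[OF assms(1-7)]) (simp_all add: \<theta>_def)
  then have served: "\<beta> * \<gamma> / (\<beta> + \<gamma>) * Ns = \<alpha> * nj * (\<theta> / 4 - 1 + ln 2)"
    using assms(2,3) by (simp add: field_simps)
  have "Cbp_formula \<alpha> \<beta> \<gamma> L vf nj Ns
      = \<beta> * \<gamma> / (\<beta> + \<gamma>) * Ns * (4 * L / (nj * vf)) + 4 * \<alpha> * L / vf * (1 - ln 2)"
    by (simp add: Cbp_formula_def Ip_def)
  also have "\<dots> = \<alpha> * nj * (\<theta> / 4 - 1 + ln 2) * (4 * L / (nj * vf)) + 4 * \<alpha> * L / vf * (1 - ln 2)"
    by (simp only: served)
  also have "\<dots> = C"
    using assms(1,4-6) by (simp add: \<theta>_def field_simps)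
  finally show ?thesis by simp
qed

lemma ln_less_half_diff_inverse:
  fixes u :: real
  assumes "1 < u"
  shows "ln u < (u - 1 / u) / 2"
proof -
  define f where "f x = (x - 1 / x) / 2 - ln x" for x :: real
  have "f 1 < f u"
  proof (rule DERIV_pos_imp_increasing_open[OF assms])
    fix x :: real assume x: "1 < x" "x < u"
    have "(f has_real_derivative (1 - 1 / x)\<^sup>2 / 2) (at x)"
      unfolding f_def using x
      by (auto intro!: derivative_eq_intros simp: power2_eq_square field_simps)
    moreover have "(1 - 1 / x)\<^sup>2 / 2 > 0" using x by simp
    ultimately show "\<exists>y. (f has_real_derivative y) (at x) \<and> 0 < y" by blast
  next
    show "continuous_on {1..u} f"
      unfolding f_def by (intro continuous_intros) auto
  qed
  then show ?thesis by (simp add: f_def)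
qed

(* The two sides are the demand factors of bathtub_eq_demand and bathtub_eq_p_demand. *)
lemma ln_add_inverse_less_linear:
  fixes \<theta> :: real
  assumes "2 < \<theta>"
  shows "ln \<theta> + 1 / \<theta> - 1 < \<theta> / 4 - 1 + ln 2"
proof -
  have "ln (\<theta> / 2) < (\<theta> / 2 - 1 / (\<theta> / 2)) / 2"
    using assms by (intro ln_less_half_diff_inverse) simp
  moreover have "ln \<theta> = ln 2 + ln (\<theta> / 2)"
    using assms by (simp add: ln_div)
  ultimately show ?thesis by (simp add: field_simps)
qed

lemma hypercongestion_mitigation:
  assumes "\<alpha> > 0" "\<beta> > 0" "\<gamma> > 0" "L > 0" "vf > 0" "nj > 0"
    and eq: "bathtub_eq \<alpha> \<beta> \<gamma> L vf nj ts Ns n Cb" and hyper: "2 < Cb * vf / (\<alpha> * L)"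
    and eq_p: "bathtub_eq_p \<alpha> \<beta> \<gamma> L vf nj ts Ns np q Cp"
  shows "Cp < Cb"
proof (rule ccontr)
  define \<theta> where "\<theta> = Cb * vf / (\<alpha> * L)"
  define \<theta>p where "\<theta>p = Cp * vf / (\<alpha> * L)"
  have "2 < \<theta>" using hyper by (simp add: \<theta>_def)
  assume "\<not> Cp < Cb"
  then have "\<theta> \<le> \<theta>p"
    using assms(1,4,5) by (simp add: \<theta>_def \<theta>p_def divide_right_mono)
  have "Ns = \<alpha> * nj * (1 / \<beta> + 1 / \<gamma>) * (ln \<theta> + 1 / \<theta> - 1)"
    using hyper by (intro bathtub_eq_demand[OF assms(1-7)]) (simp_all add: \<theta>_def)
  moreover have "Ns = \<alpha> * nj * (1 / \<beta> + 1 / \<gamma>) * (\<theta>p / 4 - 1 + ln 2)"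
    using \<open>2 < \<theta>\<close> \<open>\<theta> \<le> \<theta>p\<close>
    by (intro bathtub_eq_p_demand[OF assms(1-6) eq_p]) (simp_all add: \<theta>p_def)
  moreover have "ln \<theta> + 1 / \<theta> - 1 < \<theta>p / 4 - 1 + ln 2"
    using ln_add_inverse_less_linear[OF \<open>2 < \<theta>\<close>] \<open>\<theta> \<le> \<theta>p\<close> by simp
  moreover have "\<alpha> * nj * (1 / \<beta> + 1 / \<gamma>) > 0"
    using assms(1-3,6) by (simp add: add_pos_pos)
  ultimately show False by (metis less_irrefl mult_strict_left_mono)
qed

lemma Cbp_formula_strict_mono:
  assumes "\<beta> > 0" "\<gamma> > 0" "L > 0" "vf > 0" "Ns > 0"
    and "0 < \<alpha>'" "\<alpha>' \<le> \<alpha>" "0 < nj" "nj \<le> nj'" and "\<alpha>' < \<alpha> \<or> nj < nj'"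
  shows "Cbp_formula \<alpha>' \<beta> \<gamma> L vf nj' Ns < Cbp_formula \<alpha> \<beta> \<gamma> L vf nj Ns"
proof -
  define c where "c = \<beta> * \<gamma> / (\<beta> + \<gamma>) * (4 * L * Ns / vf)"
  define d where "d = 4 * L / vf * (1 - ln 2)"
  have Cbp: "Cbp_formula a \<beta> \<gamma> L vf m Ns = c / m + d * a" for a m
    using assms(3,4) by (simp add: Cbp_formula_def Ip_def c_def d_def field_simps)
  have "c > 0" "d > 0"
    using assms(1-5) ln_2_less_1 by (simp_all add: c_def d_def add_pos_pos)
  then have "c / nj' \<le> c / nj" "d * \<alpha>' \<le> d * \<alpha>"
    using assms(6-9) by (simp_all add: divide_left_mono)
  moreover have "c / nj' < c / nj \<or> d * \<alpha>' < d * \<alpha>"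
    using assms(8,10) \<open>c > 0\<close> \<open>d > 0\<close> by (auto simp: divide_strict_left_mono)
  ultimately show ?thesis by (auto simp: Cbp)
qed

theorem proposition3:
  fixes \<alpha> \<beta> \<gamma> L vf nj tstar Ns :: real
  assumes "\<alpha> > 0" "\<beta> > 0" "\<gamma> > 0" "L > 0" "vf > 0" "nj > 0" "Ns > 0"
  shows
    \<comment> \<open>(i) in the controlled regime the equilibrium cost is determined by the closed form\<close>
    "(\<forall>n q C. bathtub_eq_p \<alpha> \<beta> \<gamma> L vf nj tstar Ns n q C \<and> C * vf / (\<alpha> * L) > 2
        \<longrightarrow> C = Cbp_formula \<alpha> \<beta> \<gamma> L vf nj Ns)
     \<and>
    \<comment> \<open>(ii) monotonicity in n_j and alpha, and the autonomous-vehicle comparison\<close>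
     (\<forall>nj1 nj2. 0 < nj1 \<and> nj1 < nj2 \<longrightarrow>
        Cbp_formula \<alpha> \<beta> \<gamma> L vf nj2 Ns < Cbp_formula \<alpha> \<beta> \<gamma> L vf nj1 Ns)
     \<and>
     (\<forall>\<alpha>1 \<alpha>2. 0 < \<alpha>1 \<and> \<alpha>1 < \<alpha>2 \<longrightarrow>
        Cbp_formula \<alpha>1 \<beta> \<gamma> L vf nj Ns < Cbp_formula \<alpha>2 \<beta> \<gamma> L vf nj Ns)
     \<and>
     (\<forall>\<eta> \<xi>. \<beta> / \<alpha> < \<eta> \<and> \<eta> \<le> 1 \<and> 1 \<le> \<xi> \<and> (\<eta>, \<xi>) \<noteq> (1, 1) \<longrightarrow>
        Cbp_formula (\<eta> * \<alpha>) \<beta> \<gamma> L vf (\<xi> * nj) Ns < Cbp_formula \<alpha> \<beta> \<gamma> L vf nj Ns)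
     \<and>
    \<comment> \<open>(iii) hypercongestion mitigation\<close>
     (\<forall>n Cb np q Cp. bathtub_eq \<alpha> \<beta> \<gamma> L vf nj tstar Ns n Cb \<and> Cb * vf / (\<alpha> * L) > 2 \<and>
        bathtub_eq_p \<alpha> \<beta> \<gamma> L vf nj tstar Ns np q Cp \<longrightarrow> Cb > Cp)"
proof (intro conjI allI impI; elim conjE)
  show "C = Cbp_formula \<alpha> \<beta> \<gamma> L vf nj Ns"
    if "bathtub_eq_p \<alpha> \<beta> \<gamma> L vf nj tstar Ns n q C" "C * vf / (\<alpha> * L) > 2" for n q C
    using bathtub_eq_p_cost[OF assms(1-6) that] .
  show "Cbp_formula \<alpha> \<beta> \<gamma> L vf nj2 Ns < Cbp_formula \<alpha> \<beta> \<gamma> L vf nj1 Ns"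
    if "0 < nj1" "nj1 < nj2" for nj1 nj2
    using that assms by (intro Cbp_formula_strict_mono) auto
  show "Cbp_formula \<alpha>1 \<beta> \<gamma> L vf nj Ns < Cbp_formula \<alpha>2 \<beta> \<gamma> L vf nj Ns"
    if "0 < \<alpha>1" "\<alpha>1 < \<alpha>2" for \<alpha>1 \<alpha>2
    using that assms by (intro Cbp_formula_strict_mono) auto
  show "Cbp_formula (\<eta> * \<alpha>) \<beta> \<gamma> L vf (\<xi> * nj) Ns < Cbp_formula \<alpha> \<beta> \<gamma> L vf nj Ns"
    if "\<beta> / \<alpha> < \<eta>" "\<eta> \<le> 1" "1 \<le> \<xi>" "(\<eta>, \<xi>) \<noteq> (1, 1)" for \<eta> \<xi>
  proof (rule Cbp_formula_strict_mono)
    \<comment> \<open>only the positivity of \<eta> is needed from \<open>\<beta> / \<alpha> < \<eta>\<close>\<close>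
    have "0 < \<beta> / \<alpha>" using assms(1,2) by simp
    with that(1) have "0 < \<eta>" by linarith
    then show "0 < \<eta> * \<alpha>" "\<eta> * \<alpha> \<le> \<alpha>" using that(2) assms(1) by simp_all
    show "nj \<le> \<xi> * nj" using that(3) assms(6) by simp
    show "\<eta> * \<alpha> < \<alpha> \<or> nj < \<xi> * nj" using that(2-4) assms(1,6) by auto
  qed (use assms in auto)
  show "Cp < Cb"
    if "bathtub_eq \<alpha> \<beta> \<gamma> L vf nj tstar Ns n Cb" "Cb * vf / (\<alpha> * L) > 2"
      "bathtub_eq_p \<alpha> \<beta> \<gamma> L vf nj tstar Ns np q Cp" for n Cb np q Cp
    using hypercongestion_mitigation[OF assms(1-6) that] .
qed

end
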